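(* Let $X$ be an $n$-dimensional polyhedral normed space and let $Y \subseteq X$ be a $k$-dimensional subspace, where $1 \leq k \leq n-1$. Then there exists a projection $P \in \mathcal{P}_{\min}(X, Y)$ with at least $n$ norming pairs.
   Context: A normed space $X=(\mathbb{R}^n,\|\cdot\|)$ is polyhedral if its unit ball $B_X$ is a convex polytope; then $\mathrm{ext}\,B_X$ and $\mathrm{ext}\,B_{X^*}$ (extreme points of the unit balls of $X$ and its dual) are finite. A projection onto $Y$ is a linear $P:X\to Y$ with $P|_Y=\mathrm{id}_Y$; $\lambda(Y,X)$ is the infimum of the operator norms of such projections and $\mathcal{P}_{\min}(X,Y)$ is the set of projections of norm $\lambda(Y,X)$. A norming pair for a projection $P$ is a pair $(x,f)\in \mathrm{ext}\,B_X\times \mathrm{ext}\,B_{X^*}$ with $f(P(x))=\|P\|$. *)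

theory Defs
  imports "HOL-Analysis.Analysis"
begin

definition is_norm_fun :: "(real^'n \<Rightarrow> real) \<Rightarrow> bool" where
  "is_norm_fun N \<longleftrightarrow> (\<forall>x. 0 \<le> N x) \<and> (\<forall>x. N x = 0 \<longleftrightarrow> x = 0)
     \<and> (\<forall>c x. N (c *\<^sub>R x) = \<bar>c\<bar> * N x) \<and> (\<forall>x y. N (x + y) \<le> N x + N y)"

definition unit_ball_N :: "(real^'n \<Rightarrow> real) \<Rightarrow> (real^'n) set" where
  "unit_ball_N N = {x. N x \<le> 1}"

definition polyhedral_norm :: "(real^'n \<Rightarrow> real) \<Rightarrow> bool" where
  "polyhedral_norm N \<longleftrightarrow> is_norm_fun N \<and> polytope (unit_ball_N N)"

text \<open>Unit ball of the dual space; a linear functional f is identified with the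
  vector u such that f x = u \<bullet> x.\<close>
definition dual_ball_N :: "(real^'n \<Rightarrow> real) \<Rightarrow> (real^'n) set" where
  "dual_ball_N N = {u. \<forall>x. \<bar>u \<bullet> x\<bar> \<le> N x}"

definition is_projection :: "(real^'n) set \<Rightarrow> (real^'n \<Rightarrow> real^'n) \<Rightarrow> bool" where
  "is_projection Y P \<longleftrightarrow> linear P \<and> range P \<subseteq> Y \<and> (\<forall>y\<in>Y. P y = y)"

definition op_norm_N :: "(real^'n \<Rightarrow> real) \<Rightarrow> (real^'n \<Rightarrow> real^'n) \<Rightarrow> real" where
  "op_norm_N N P = Sup {N (P x) | x. N x \<le> 1}"

definition proj_const :: "(real^'n \<Rightarrow> real) \<Rightarrow> (real^'n) set \<Rightarrow> real" where
  "proj_const N Y = Inf {op_norm_N N P | P. is_projection Y P}"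

definition min_projections :: "(real^'n \<Rightarrow> real) \<Rightarrow> (real^'n) set \<Rightarrow> (real^'n \<Rightarrow> real^'n) set" where
  "min_projections N Y = {P. is_projection Y P \<and> op_norm_N N P = proj_const N Y}"

definition norming_pairs :: "(real^'n \<Rightarrow> real) \<Rightarrow> (real^'n \<Rightarrow> real^'n) \<Rightarrow> ((real^'n) \<times> (real^'n)) set" where
  "norming_pairs N P = {(x, u) | x u. (x extreme_point_of (unit_ball_N N)) \<and>
      (u extreme_point_of (dual_ball_N N)) \<and> (u \<bullet> P x) = op_norm_N N P}"

end

theory Submission
  imports Defs
begin

text \<open>
  Identify projections with matrices. For a polyhedral norm the operator norm of \<open>M\<close> is the
  maximum of the finitely many linear forms \<open>M \<mapsto> w \<bullet> (M *v x)\<close>, where \<open>x\<close> and \<open>w\<close>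
  range over the extreme points of the unit ball and of the dual ball, and the norming pairs
  of \<open>M\<close> are the forms attaining this maximum. The projections onto \<open>Y\<close> form a closed affine
  space whose direction space \<open>L\<close> (maps into \<open>Y\<close> vanishing on \<open>Y\<close>) has dimension at least
  \<open>n - 1\<close>, and a minimal projection exists by coercivity of the norm.

  Starting from a minimal projection, move along a direction of \<open>L\<close> on which all active forms
  vanish until another form becomes active: the norm stays minimal and the common kernel in
  \<open>L\<close> of the active forms shrinks. Once it is trivial there are more than \<open>dim L\<close> active
  forms, since otherwise some direction of \<open>L\<close> decreases all of them at once.
\<close>

lemma linear_le_on_convex_hull:
  fixes g :: "'a::real_vector \<Rightarrow> real"
  assumes "linear g" and "\<And>v. v \<in> V \<Longrightarrow> g v \<le> c" and "x \<in> convex hull V"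
  shows "g x \<le> c"
proof -
  have "convex (g -` {..c})"
    using convex_linear_vimage[OF assms(1)] by simp
  moreover have "V \<subseteq> g -` {..c}"
    using assms(2) by auto
  ultimately have "convex hull V \<subseteq> g -` {..c}"
    by (rule hull_minimal[rotated])
  then show ?thesis
    using assms(3) by auto
qed

lemma continuous_on_Max_finite:
  fixes f :: "'i \<Rightarrow> 'a::topological_space \<Rightarrow> real"
  assumes "finite I" "I \<noteq> {}" "\<And>i. i \<in> I \<Longrightarrow> continuous_on S (f i)"
  shows "continuous_on S (\<lambda>x. Max ((\<lambda>i. f i x) ` I))"
  using assms
proof (induction I rule: finite_ne_induct)
  case (singleton i)
  then show ?case by simp
next
  case (insert i I)
  then show ?case
    by (simp add: Max_insert continuous_on_max)
qed

lemma continuous_attains_inf_bounded_sublevel: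
  fixes f :: "'a::heine_borel \<Rightarrow> real"
  assumes "closed S" "S \<noteq> {}" "continuous_on UNIV f"
    and "\<And>c. bounded {x \<in> S. f x \<le> c}"
  obtains x where "x \<in> S" "\<And>y. y \<in> S \<Longrightarrow> f x \<le> f y"
proof -
  obtain x1 where x1: "x1 \<in> S"
    using assms(2) by blast
  define C where "C = {x \<in> S. f x \<le> f x1}"
  have "closed C"
    unfolding C_def using assms(1,3)
    by (simp add: Collect_conj_eq closed_Collect_le closed_Int)
  then have "compact C"
    using assms(4) by (simp add: C_def compact_eq_bounded_closed)
  moreover have "C \<noteq> {}"
    using x1 by (auto simp: C_def)
  moreover have "continuous_on C f"
    using assms(3) continuous_on_subset subset_UNIV by blast
  ultimately obtain x0 where x0: "x0 \<in> C" "\<And>y. y \<in> C \<Longrightarrow> f x0 \<le> f y"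
    by (metis continuous_attains_inf)
  show ?thesis
  proof (rule that)
    show "x0 \<in> S"
      using x0(1) by (simp add: C_def)
  next
    fix y assume "y \<in> S"
    then show "f x0 \<le> f y"
      using x0 by (cases "f y \<le> f x1") (auto simp: C_def)
  qed
qed

lemma dim_le_dim_Int_kernel:
  fixes A :: "'a::euclidean_space set" and f :: "'a \<Rightarrow> real"
  assumes "subspace A" and "linear f"
  shows "dim A \<le> dim (A \<inter> {x. f x = 0}) + 1"
proof (cases "\<forall>a\<in>A. f a = 0")
  case True
  then have "A \<inter> {x. f x = 0} = A" by auto
  then show ?thesis by simp
next
  case False
  then obtain a0 where a0: "a0 \<in> A" "f a0 \<noteq> 0" by blast
  let ?Z = "A \<inter> {x. f x = 0}"
  have "A \<subseteq> span (insert a0 ?Z)"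
  proof
    fix a assume a: "a \<in> A"
    let ?c = "f a / f a0"
    have "a - ?c *\<^sub>R a0 \<in> ?Z"
      using a a0 assms by (auto simp: subspace_diff subspace_scale linear_diff linear_scale)
    then have "a - ?c *\<^sub>R a0 \<in> span (insert a0 ?Z)"
      by (simp add: span_base)
    moreover have "?c *\<^sub>R a0 \<in> span (insert a0 ?Z)"
      by (simp add: span_base span_scale)
    ultimately have "a - ?c *\<^sub>R a0 + ?c *\<^sub>R a0 \<in> span (insert a0 ?Z)"
      by (rule span_add)
    then show "a \<in> span (insert a0 ?Z)" by simp
  qed
  then have "dim A \<le> dim (span (insert a0 ?Z))"
    by (rule dim_subset)
  also have "\<dots> = dim (insert a0 ?Z)"
    by simp
  also have "\<dots> \<le> dim ?Z + 1"
    by (simp add: dim_insert)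
  finally show ?thesis .
qed

section \<open>Minimizing a maximum of linear forms over an affine space\<close>

locale finite_linear_forms =
  fixes I :: "'i set" and l :: "'i \<Rightarrow> 'a::euclidean_space \<Rightarrow> real"
  assumes finite_I: "finite I" and I_ne: "I \<noteq> {}" and linear_l: "linear (l i)"
begin

definition max_form :: "'a \<Rightarrow> real" where
  "max_form M = Max ((\<lambda>i. l i M) ` I)"

definition active :: "'a \<Rightarrow> 'i set" where
  "active M = {i \<in> I. l i M = max_form M}"

lemma l_add: "l i (x + y) = l i x + l i y"
  using linear_l by (rule linear_add)

lemma l_scaleR: "l i (c *\<^sub>R x) = c * l i x"
  using linear_scale[OF linear_l] by simp

lemma l_uminus: "l i (- x) = - l i x"
  using linear_l by (rule linear_neg)

lemma l_zero: "l i 0 = 0"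
  using linear_l by (rule linear_0)

lemma l_sum: "l i (\<Sum>s\<in>S. g s) = (\<Sum>s\<in>S. l i (g s))"
  using linear_sum[OF linear_l] by (simp add: o_def)

lemma max_form_ge: "i \<in> I \<Longrightarrow> l i M \<le> max_form M"
  unfolding max_form_def using finite_I by simp

lemma max_form_le_iff: "max_form M \<le> c \<longleftrightarrow> (\<forall>i\<in>I. l i M \<le> c)"
  unfolding max_form_def using finite_I I_ne by simp

lemma max_form_less_iff: "max_form M < c \<longleftrightarrow> (\<forall>i\<in>I. l i M < c)"
  unfolding max_form_def using finite_I I_ne by simp

lemma max_form_attained: obtains i where "i \<in> I" "l i M = max_form M"
proof -
  have "max_form M \<in> (\<lambda>i. l i M) ` I"
    unfolding max_form_def using finite_I I_ne by simp
  then show ?thesis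
    using that by force
qed

lemma finite_active: "finite (active M)"
  using finite_I by (simp add: active_def)

lemma continuous_max_form: "continuous_on UNIV max_form"
proof -
  have "continuous_on UNIV (l i)" for i
    using linear_l linear_continuous_on linear_conv_bounded_linear by blast
  then show ?thesis
    unfolding max_form_def[abs_def] using finite_I I_ne by (intro continuous_on_Max_finite)
qed

lemma max_form_descent:
  assumes "\<And>i. i \<in> active M \<Longrightarrow> l i E < 0"
  obtains t where "max_form (M + t *\<^sub>R E) < max_form M"
proof -
  have "\<forall>\<^sub>F t in at_right 0. l i (M + t *\<^sub>R E) < max_form M" if i: "i \<in> I" for i
  proof (cases "i \<in> active M")
    case True
    then have "l i (M + t *\<^sub>R E) = max_form M + t * l i E" for t
      by (simp add: active_def l_add l_scaleR)
    then show ?thesis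
      using assms[OF True] eventually_at_right_less[of 0]
      by (auto elim!: eventually_mono simp: mult_pos_neg)
  next
    case False
    then have "l i M < max_form M"
      using i max_form_ge[OF i, of M] by (auto simp: active_def)
    moreover have "((\<lambda>t. l i M + t * l i E) \<longlongrightarrow> l i M + 0 * l i E) (at_right 0)"
      by (intro tendsto_intros)
    ultimately show ?thesis
      by (auto simp: l_add l_scaleR dest: order_tendstoD(2))
  qed
  then have "\<forall>\<^sub>F t in at_right 0. max_form (M + t *\<^sub>R E) < max_form M"
    using finite_I by (simp add: max_form_less_iff eventually_ball_finite)
  then show ?thesis
    using that eventually_happens' trivial_limit_at_right_real by blast
qed

end

locale affine_max_form_problem = finite_linear_forms I l
  for I :: "'i set" and l :: "'i \<Rightarrow> 'a::euclidean_space \<Rightarrow> real" +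
  fixes A L :: "'a set"
  assumes subspace_L: "subspace L"
    and add_L: "M \<in> A \<Longrightarrow> E \<in> L \<Longrightarrow> M + E \<in> A"
    and separating: "E \<in> L \<Longrightarrow> (\<And>i. i \<in> I \<Longrightarrow> l i E = 0) \<Longrightarrow> E = 0"
begin

definition minimizer :: "'a \<Rightarrow> bool" where
  "minimizer M \<longleftrightarrow> M \<in> A \<and> (\<forall>M'\<in>A. max_form M \<le> max_form M')"

definition common_kernel :: "'i set \<Rightarrow> 'a set" where
  "common_kernel S = {E \<in> L. \<forall>i\<in>S. l i E = 0}"

lemma subspace_common_kernel: "subspace (common_kernel S)"
  using subspace_L unfolding subspace_def common_kernel_def by (auto simp: l_add l_scaleR l_zero)

lemma common_kernel_antimono: "S \<subseteq> T \<Longrightarrow> common_kernel T \<subseteq> common_kernel S"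
  by (auto simp: common_kernel_def)

lemma dim_L_le_common_kernel: "finite S \<Longrightarrow> dim L \<le> dim (common_kernel S) + card S"
proof (induction S rule: finite_induct)
  case empty
  have "common_kernel {} = L"
    by (simp add: common_kernel_def)
  then show ?case by simp
next
  case (insert i S)
  have "common_kernel (insert i S) = common_kernel S \<inter> {E. l i E = 0}"
    by (auto simp: common_kernel_def)
  then have "dim (common_kernel S) \<le> dim (common_kernel (insert i S)) + 1"
    using dim_le_dim_Int_kernel[OF subspace_common_kernel linear_l] by simp
  then show ?case
    using insert by simp
qed

text \<open>By the dimension count each form of \<open>S\<close> is nonzero on the common kernel of the
  others; rescaled kernel vectors then form a dual basis.\<close>
lemma common_value_attained:
  assumes "finite S" "common_kernel S = {0}" "card S \<le> dim L"
  obtains E where "E \<in> L" "\<And>i. i \<in> S \<Longrightarrow> l i E = c"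
proof -
  have "\<exists>E \<in> common_kernel (S - {s}). l s E \<noteq> 0" if s: "s \<in> S" for s
  proof -
    have "card (S - {s}) < card S"
      using s assms(1) by (rule card_Diff1_less[rotated])
    then have "0 < dim (common_kernel (S - {s}))"
      using dim_L_le_common_kernel[of "S - {s}"] assms(1,3) by simp
    then obtain E where E: "E \<in> common_kernel (S - {s})" "E \<noteq> 0"
      by (metis dim_eq_0 less_irrefl singletonI subsetI)
    then have "E \<notin> common_kernel S"
      using assms(2) by blast
    then show ?thesis
      using E(1) s by (auto simp: common_kernel_def)
  qed
  then obtain G where G: "\<And>s. s \<in> S \<Longrightarrow> G s \<in> common_kernel (S - {s}) \<and> l s (G s) \<noteq> 0"
    by metis
  define E where "E = (\<Sum>s\<in>S. (c / l s (G s)) *\<^sub>R G s)"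
  show ?thesis
  proof (rule that)
    show "E \<in> L"
      unfolding E_def using G subspace_L
      by (intro subspace_sum subspace_scale) (auto simp: common_kernel_def)
  next
    fix i assume i: "i \<in> S"
    have "l i E = (\<Sum>s\<in>S. if s = i then c else 0)"
      unfolding E_def l_sum l_scaleR
      using G i by (intro sum.cong) (auto simp: common_kernel_def)
    then show "l i E = c"
      using i assms(1) by simp
  qed
qed

lemma card_active_of_minimizer:
  assumes M: "minimizer M" and trivial: "common_kernel (active M) = {0}"
  shows "dim L < card (active M)"
proof (rule ccontr)
  assume "\<not> dim L < card (active M)"
  then obtain E where E: "E \<in> L" "\<And>i. i \<in> active M \<Longrightarrow> l i E = -1"
    using common_value_attained[OF finite_active trivial] by (metis not_less)
  then obtain t where "max_form (M + t *\<^sub>R E) < max_form M"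
    using max_form_descent by (metis neg_less_0_iff_less zero_less_one)
  moreover have "M + t *\<^sub>R E \<in> A"
    using M E(1) add_L subspace_L by (simp add: minimizer_def subspace_scale)
  ultimately show False
    using M by (auto simp: minimizer_def not_le[symmetric])
qed

text \<open>Walk from \<open>M\<close> along \<open>E'\<close> until the first inactive form catches up with the maximum:
  the active forms stay constant, none overtakes them, and the new active form is not
  constant along \<open>E'\<close>.\<close>
lemma minimizer_shrink_common_kernel:
  assumes M: "minimizer M" and E: "E \<in> common_kernel (active M)" "E \<noteq> 0"
  obtains M' where "minimizer M'" "common_kernel (active M') \<subset> common_kernel (active M)"
proof -
  obtain r where r: "r \<in> I" "l r E \<noteq> 0"
    using separating E by (auto simp: common_kernel_def)
  define E' where "E' = (if 0 < l r E then E else - E)"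
  have E'_ker: "E' \<in> common_kernel (active M)"
    using E(1) subspace_common_kernel subspace_neg by (auto simp: E'_def)
  define R where "R = {i \<in> I. 0 < l i E'}"
  define step where "step i = (max_form M - l i M) / l i E'" for i
  have "r \<in> R"
    using r by (auto simp: R_def E'_def l_uminus)
  moreover have "finite R"
    using finite_I by (simp add: R_def)
  ultimately obtain s where s: "s \<in> R" and s_min: "\<And>i. i \<in> R \<Longrightarrow> step s \<le> step i"
    using arg_min_if_finite[of R step] by (metis arg_min_least empty_iff)
  have s_pos: "0 < l s E'"
    using s by (simp add: R_def)
  have "0 \<le> step s"
    using s s_pos max_form_ge[of s M] by (simp add: R_def step_def)
  define M' where "M' = M + step s *\<^sub>R E'"
  have l_M': "l i M' = l i M + step s * l i E'" for i
    by (simp add: M'_def l_add l_scaleR)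
  have "M' \<in> A"
    using M E'_ker add_L subspace_L
    by (simp add: M'_def minimizer_def common_kernel_def subspace_scale)
  moreover have "max_form M' \<le> max_form M"
    unfolding max_form_le_iff
  proof
    fix i assume i: "i \<in> I"
    show "l i M' \<le> max_form M"
    proof (cases "0 < l i E'")
      case True
      then have "step s * l i E' \<le> max_form M - l i M"
        using s_min[of i] i by (simp add: R_def step_def le_divide_eq)
      then show ?thesis
        by (simp add: l_M')
    next
      case False
      then have "step s * l i E' \<le> 0"
        using \<open>0 \<le> step s\<close> by (simp add: mult_nonneg_nonpos)
      then show ?thesis
        using max_form_ge[OF i, of M] by (simp add: l_M')
    qed
  qed
  ultimately have max_M': "max_form M' = max_form M"
    using M by (auto simp: minimizer_def intro: antisym)
  have "minimizer M'"
    using M \<open>M' \<in> A\<close> by (simp add: minimizer_def max_M')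
  moreover have "active M \<subseteq> active M'"
    using E'_ker by (auto simp: active_def common_kernel_def l_M' max_M')
  moreover have "s \<in> active M'"
    using s s_pos by (simp add: active_def R_def l_M' max_M' step_def)
  then have "E' \<notin> common_kernel (active M')"
    using s_pos unfolding common_kernel_def by (metis (mono_tags, lifting) less_irrefl mem_Collect_eq)
  ultimately show ?thesis
    using that E'_ker common_kernel_antimono by blast
qed

lemma exists_minimizer_trivial_common_kernel:
  assumes "minimizer M"
  obtains M' where "minimizer M'" "common_kernel (active M') = {0}"
  using assms
proof (induction "dim (common_kernel (active M))" arbitrary: M rule: less_induct)
  case less
  show ?case
  proof (cases "common_kernel (active M) = {0}")
    case True
    then show ?thesis
      using less.prems by blast
  next
    case False
    then obtain E where "E \<in> common_kernel (active M)" "E \<noteq> 0"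
      using subspace_common_kernel subspace_0 by blast
    then obtain M' where M': "minimizer M'"
      and shrink: "common_kernel (active M') \<subset> common_kernel (active M)"
      using minimizer_shrink_common_kernel less.prems(2) by blast
    have "dim (common_kernel (active M')) < dim (common_kernel (active M))"
      using dim_psubset[of "common_kernel (active M')" "common_kernel (active M)"] shrink
      by (simp add: span_eq_iff[THEN iffD2, OF subspace_common_kernel])
    then show ?thesis
      using less.hyps less.prems(1) M' by blast
  qed
qed

theorem exists_minimizer_many_active:
  assumes "minimizer M0"
  obtains M where "minimizer M" "dim L < card (active M)"
  using exists_minimizer_trivial_common_kernel[OF assms] card_active_of_minimizer by metis

end

section \<open>Polyhedral norms\<close>

definition pair_eval :: "(real^'n) \<times> (real^'n) \<Rightarrow> real^'n^'n \<Rightarrow> real" where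
  "pair_eval p M = snd p \<bullet> (M *v fst p)"

lemma linear_pair_eval: "linear (pair_eval p)"
  unfolding pair_eval_def
  by (simp add: linear_iff matrix_vector_mult_add_rdistrib inner_add_right
      scaleR_matrix_vector_assoc[symmetric])

locale polyhedral_normed =
  fixes N :: "real^'n \<Rightarrow> real"
  assumes polyhedral: "polyhedral_norm N"
begin

abbreviation "B \<equiv> unit_ball_N N"
abbreviation "D \<equiv> dual_ball_N N"

definition V :: "(real^'n) set" where "V = {x. x extreme_point_of B}"
definition W :: "(real^'n) set" where "W = {u. u extreme_point_of D}"

lemma is_norm_fun_N: "is_norm_fun N"
  using polyhedral polyhedral_norm_def by blast

lemma N_nonneg: "0 \<le> N x"
  using is_norm_fun_N unfolding is_norm_fun_def by blast

lemma N_eq_0_iff: "N x = 0 \<longleftrightarrow> x = 0"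
  using is_norm_fun_N unfolding is_norm_fun_def by blast

lemma N_scaleR: "N (c *\<^sub>R x) = \<bar>c\<bar> * N x"
  using is_norm_fun_N unfolding is_norm_fun_def by blast

lemma N_zero [simp]: "N 0 = 0"
  by (simp add: N_eq_0_iff)

lemma N_uminus: "N (- x) = N x"
  using N_scaleR[of "-1" x] by simp

lemma N_pos: "x \<noteq> 0 \<Longrightarrow> 0 < N x"
  using N_nonneg N_eq_0_iff by (metis less_eq_real_def)

lemma mem_B_iff: "x \<in> B \<longleftrightarrow> N x \<le> 1"
  by (simp add: unit_ball_N_def)

lemma normalized_in_B: "x \<noteq> 0 \<Longrightarrow> (1 / N x) *\<^sub>R x \<in> B"
  using N_pos[of x] by (simp add: mem_B_iff N_scaleR)

lemma polytope_B: "polytope B"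
  using polyhedral polyhedral_norm_def by blast

lemma compact_B: "compact B"
  using polytope_B polytope_imp_compact by blast

lemma convex_B: "convex B"
  using polytope_B polytope_imp_convex by blast

lemma finite_V: "finite V"
  unfolding V_def using finite_polyhedron_extreme_points polytope_imp_polyhedron polytope_B by blast

lemma B_eq_hull_V: "B = convex hull V"
  unfolding V_def using Krein_Milman_Minkowski compact_B convex_B by blast

lemma V_subset_B: "V \<subseteq> B"
  by (auto simp: V_def extreme_point_of_def)

lemma V_ne: "V \<noteq> {}"
  using B_eq_hull_V mem_B_iff[of 0] by auto

lemma B_bound: obtains R where "0 < R" "\<And>x. norm x \<le> R * N x"
proof -
  obtain R where R: "0 < R" "\<And>x. x \<in> B \<Longrightarrow> norm x \<le> R"
    using compact_B compact_imp_bounded bounded_pos by metis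
  have "norm x \<le> R * N x" for x
  proof (cases "x = 0")
    case False
    then have "norm ((1 / N x) *\<^sub>R x) \<le> R"
      using R(2) normalized_in_B by blast
    then show ?thesis
      using N_pos[OF False] by (simp add: divide_le_eq mult.commute)
  qed simp
  then show ?thesis
    using R(1) that by blast
qed

lemma inner_le_N:
  assumes "u \<in> D"
  shows "u \<bullet> x \<le> N x"
proof -
  have "\<bar>u \<bullet> x\<bar> \<le> N x"
    using assms by (simp add: dual_ball_N_def)
  then show ?thesis
    by linarith
qed

lemma D_eq: "D = {u. \<forall>v\<in>V. u \<bullet> v \<le> 1}"
proof (intro set_eqI iffI)
  fix u assume u: "u \<in> D"
  have "u \<bullet> v \<le> 1" if "v \<in> V" for v
    using inner_le_N[OF u, of v] that V_subset_B mem_B_iff by fastforce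
  then show "u \<in> {u. \<forall>v\<in>V. u \<bullet> v \<le> 1}"
    by blast
next
  fix u assume "u \<in> {u. \<forall>v\<in>V. u \<bullet> v \<le> 1}"
  then have le: "u \<bullet> x \<le> 1" if "x \<in> B" for x
    using linear_le_on_convex_hull[of "\<lambda>x. u \<bullet> x" V 1 x] that B_eq_hull_V
    by (simp add: linear_iff inner_add_right)
  show "u \<in> D"
    unfolding dual_ball_N_def
  proof (intro CollectI allI)
    fix x show "\<bar>u \<bullet> x\<bar> \<le> N x"
    proof (cases "x = 0")
      case False
      let ?z = "(1 / N x) *\<^sub>R x"
      have "?z \<in> B" "- ?z \<in> B"
        using normalized_in_B[OF False] by (simp_all add: mem_B_iff N_uminus)
      then have "u \<bullet> ?z \<le> 1" "u \<bullet> (- ?z) \<le> 1"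
        using le by blast+
      then have "u \<bullet> x / N x \<le> 1" "- (u \<bullet> x) / N x \<le> 1"
        by simp_all
      then have "u \<bullet> x \<le> 1 * N x" "- (u \<bullet> x) \<le> 1 * N x"
        using N_pos[OF False] by (simp_all only: divide_le_eq)
      then show ?thesis
        by linarith
    qed simp
  qed
qed

lemma polyhedron_D: "polyhedron D"
proof -
  have "D = (\<Inter>v\<in>V. {u. v \<bullet> u \<le> 1})"
    by (auto simp: D_eq inner_commute)
  then show ?thesis
    using finite_V by (auto intro!: polyhedron_Inter polyhedron_halfspace_le)
qed

lemma bounded_D: "bounded D"
proof -
  have "norm u \<le> (\<Sum>i\<in>UNIV. N (axis i 1))" if "u \<in> D" for u
  proof -
    have "norm u \<le> (\<Sum>i\<in>UNIV. \<bar>u $ i\<bar>)"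
      by (rule norm_le_l1_cart)
    also have "\<dots> \<le> (\<Sum>i\<in>UNIV. N (axis i 1))"
    proof (rule sum_mono)
      fix i
      show "\<bar>u $ i\<bar> \<le> N (axis i 1)"
      proof -
        have "\<bar>u \<bullet> axis i 1\<bar> \<le> N (axis i 1)"
          using that by (simp add: dual_ball_N_def)
        then show ?thesis
          by (simp add: inner_axis)
      qed
    qed
    finally show ?thesis .
  qed
  then show ?thesis
    unfolding bounded_iff by blast
qed

lemma finite_W: "finite W"
  unfolding W_def using finite_polyhedron_extreme_points polyhedron_D by blast

lemma D_eq_hull_W: "D = convex hull W"
proof -
  have "compact D"
    using bounded_D polyhedron_imp_closed[OF polyhedron_D] by (simp add: compact_eq_bounded_closed)
  moreover have "convex D"
    by (rule polyhedron_imp_convex[OF polyhedron_D])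
  ultimately
  show ?thesis
    unfolding W_def by (rule Krein_Milman_Minkowski)
qed

lemma W_subset_D: "W \<subseteq> D"
  by (auto simp: W_def extreme_point_of_def)

lemma zero_in_D: "0 \<in> D"
  by (simp add: dual_ball_N_def N_nonneg)

lemma W_ne: "W \<noteq> {}"
  using D_eq_hull_W zero_in_D by auto

lemma le_Max_W:
  assumes "u \<in> D"
  shows "u \<bullet> y \<le> Max ((\<lambda>w. w \<bullet> y) ` W)"
proof (rule linear_le_on_convex_hull[of "\<lambda>u. u \<bullet> y" W])
  show "linear (\<lambda>u. u \<bullet> y)"
    by (simp add: linear_iff inner_add_left)
  show "w \<bullet> y \<le> Max ((\<lambda>w. w \<bullet> y) ` W)" if "w \<in> W" for w
    using finite_W that by (simp add: Max_ge)
  show "u \<in> convex hull W"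
    using assms D_eq_hull_W by simp
qed

lemma dual_separation:
  assumes "z \<notin> B"
  obtains u where "u \<in> D" "1 < u \<bullet> z"
proof -
  obtain a b where ab: "a \<bullet> z < b" "\<And>x. x \<in> B \<Longrightarrow> b < a \<bullet> x"
    using separating_hyperplane_closed_point[OF convex_B compact_imp_closed[OF compact_B] assms]
    by blast
  have "b < 0"
    using ab(2)[of 0] by (simp add: mem_B_iff)
  define u where "u = (1 / b) *\<^sub>R a"
  have "u \<bullet> x < 1" if "x \<in> B" for x
    using ab(2)[OF that] \<open>b < 0\<close> by (simp add: u_def divide_less_eq)
  then have "u \<in> D"
    using V_subset_B by (auto simp: D_eq less_imp_le)
  moreover have "1 < u \<bullet> z"
    using ab(1) \<open>b < 0\<close> by (simp add: u_def less_divide_eq)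
  ultimately show ?thesis
    using that by blast
qed

lemma N_eq_Max_W: "N y = Max ((\<lambda>w. w \<bullet> y) ` W)"
proof (rule antisym)
  let ?m = "Max ((\<lambda>w. w \<bullet> y) ` W)"
  show "N y \<le> ?m"
  proof (rule ccontr)
    assume "\<not> N y \<le> ?m"
    moreover have "0 \<le> ?m"
      using le_Max_W[OF zero_in_D, of y] by simp
    ultimately have t: "0 < t" "?m < t" "t < N y" if "t = (?m + N y) / 2" for t
      using that by auto
    define t where "t = (?m + N y) / 2"
    note t = t[OF t_def]
    have "(1 / t) *\<^sub>R y \<notin> B"
      using t by (simp add: N_scaleR mem_B_iff)
    then obtain u where u: "u \<in> D" "1 < u \<bullet> ((1 / t) *\<^sub>R y)"
      by (rule dual_separation)
    then have "t < u \<bullet> y"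
      using t(1) by (simp add: less_divide_eq)
    then show False
      using le_Max_W[OF u(1), of y] t(2) by linarith
  qed
  have "w \<bullet> y \<le> N y" if "w \<in> W" for w
    using that W_subset_D inner_le_N by blast
  then show "?m \<le> N y"
    using finite_W W_ne by simp
qed

sublocale finite_linear_forms "V \<times> W" pair_eval
  by (rule finite_linear_forms.intro) (simp_all add: finite_V finite_W V_ne W_ne linear_pair_eval)

lemma N_mult_le_max_form_on_B:
  assumes "x \<in> B"
  shows "N (M *v x) \<le> max_form M"
proof -
  have "w \<bullet> (M *v x) \<le> max_form M" if w: "w \<in> W" for w
  proof (rule linear_le_on_convex_hull[of "\<lambda>x. w \<bullet> (M *v x)" V])
    show "linear (\<lambda>x. w \<bullet> (M *v x))"
      by (simp add: linear_iff matrix_vector_right_distrib matrix_vector_mult_scaleR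
        inner_add_right)
    show "w \<bullet> (M *v v) \<le> max_form M" if "v \<in> V" for v
      using max_form_ge[of "(v, w)" M] that w by (simp add: pair_eval_def)
    show "x \<in> convex hull V"
      using assms B_eq_hull_V by simp
  qed
  then show ?thesis
    using N_eq_Max_W[of "M *v x"] finite_W W_ne by simp
qed

lemma max_form_nonneg: "0 \<le> max_form M"
  using N_mult_le_max_form_on_B[of 0 M] by (simp add: mem_B_iff)

lemma N_mult_le: "N (M *v x) \<le> max_form M * N x"
proof (cases "x = 0")
  case False
  have "N (M *v x) = N x * N (M *v ((1 / N x) *\<^sub>R x))"
    using N_pos[OF False] by (simp add: matrix_vector_mult_scaleR N_scaleR)
  also have "\<dots> \<le> N x * max_form M"
    using N_mult_le_max_form_on_B[OF normalized_in_B[OF False]] N_nonneg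
    by (rule mult_left_mono)
  finally show ?thesis
    by (simp add: mult.commute)
qed simp

lemma op_norm_eq_max_form: "op_norm_N N (\<lambda>x. M *v x) = max_form M"
  unfolding op_norm_N_def
proof (rule cSup_eq_maximum)
  obtain p where p: "p \<in> V \<times> W" "pair_eval p M = max_form M"
    by (rule max_form_attained)
  have "fst p \<in> B" "snd p \<in> D"
    using p(1) V_subset_B W_subset_D by auto
  then have "N (M *v fst p) = max_form M"
    using p(2) inner_le_N[of "snd p" "M *v fst p"] N_mult_le_max_form_on_B[of "fst p" M]
    by (simp add: pair_eval_def)
  then show "max_form M \<in> {N (M *v x) |x. N x \<le> 1}"
    using \<open>fst p \<in> B\<close> by (auto simp: mem_B_iff intro!: exI[of _ "fst p"])
next
  fix s assume "s \<in> {N (M *v x) |x. N x \<le> 1}"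
  then show "s \<le> max_form M"
    using N_mult_le_max_form_on_B by (auto simp: mem_B_iff)
qed

lemma max_form_eq_0_imp_zero:
  assumes "\<And>p. p \<in> V \<times> W \<Longrightarrow> pair_eval p E = 0"
  shows "E = 0"
proof -
  have "max_form E \<le> 0"
    using assms by (simp add: max_form_le_iff)
  then have "N (E *v x) = 0" for x
    using N_mult_le[of E x] N_nonneg[of x] N_nonneg[of "E *v x"] max_form_nonneg[of E]
    by simp
  then show ?thesis
    by (simp add: N_eq_0_iff matrix_eq)
qed

lemma bounded_max_form_sublevel: "bounded {M. max_form M \<le> c}"
proof -
  obtain R where R: "0 < R" "\<And>x. norm x \<le> R * N x"
    using B_bound by blast
  define K where "K = R * (\<Sum>j\<in>UNIV. N (axis j (1::real)))"
  have entry: "\<bar>M $ i $ j\<bar> \<le> K * max_form M" for M :: "real^'n^'n" and i j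
  proof -
    have "\<bar>M $ i $ j\<bar> \<le> norm (M *v axis j 1)"
      using component_le_norm_cart[of "M *v axis j 1" i]
      by (simp add: matrix_vector_mult_basis column_def)
    also have "\<dots> \<le> R * N (M *v axis j 1)"
      by (rule R(2))
    also have "\<dots> \<le> R * (max_form M * N (axis j 1))"
      using R(1) N_mult_le by (intro mult_left_mono) auto
    also have "\<dots> \<le> R * (max_form M * (\<Sum>j\<in>UNIV. N (axis j 1)))"
      using R(1) max_form_nonneg N_nonneg
      by (intro mult_left_mono member_le_sum) (auto simp: sum_nonneg)
    finally show ?thesis
      by (simp add: K_def ac_simps)
  qed
  have "0 \<le> K"
    unfolding K_def using R(1) N_nonneg by (simp add: sum_nonneg)
  have "norm M \<le> (\<Sum>i::'n\<in>UNIV. \<Sum>j::'n\<in>UNIV. K * c)" if "max_form M \<le> c" for M :: "real^'n^'n"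
  proof -
    have entry_c: "\<bar>M $ i $ j\<bar> \<le> K * c" for i j
      using entry[of M i j] mult_left_mono[OF that \<open>0 \<le> K\<close>] by linarith
    have "norm M \<le> (\<Sum>i\<in>UNIV. norm (M $ i))"
      by (simp add: norm_vec_def L2_set_le_sum)
    also have "\<dots> \<le> (\<Sum>i\<in>UNIV. \<Sum>j\<in>UNIV. \<bar>M $ i $ j\<bar>)"
      by (intro sum_mono norm_le_l1_cart)
    also have "\<dots> \<le> (\<Sum>i::'n\<in>UNIV. \<Sum>j::'n\<in>UNIV. K * c)"
      by (intro sum_mono entry_c)
    finally show ?thesis .
  qed
  then show ?thesis
    unfolding bounded_iff by blast
qed

end

section \<open>Projection matrices\<close>

definition proj_matrices :: "(real^'n) set \<Rightarrow> (real^'n^'n) set" where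
  "proj_matrices Y = {M. (\<forall>x. M *v x \<in> Y) \<and> (\<forall>y\<in>Y. M *v y = y)}"

definition proj_directions :: "(real^'n) set \<Rightarrow> (real^'n^'n) set" where
  "proj_directions Y = {E. (\<forall>x. E *v x \<in> Y) \<and> (\<forall>y\<in>Y. E *v y = 0)}"

lemma is_projection_matrix_iff: "is_projection Y (\<lambda>x. M *v x) \<longleftrightarrow> M \<in> proj_matrices Y"
  by (auto simp: is_projection_def proj_matrices_def)

lemma is_projection_imp_matrix:
  assumes "is_projection Y P"
  shows "P = (\<lambda>x. matrix P *v x)" "matrix P \<in> proj_matrices Y"
proof -
  show "P = (\<lambda>x. matrix P *v x)"
    using assms by (simp add: is_projection_def)
  then show "matrix P \<in> proj_matrices Y"
    using assms is_projection_matrix_iff by metis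
qed

lemma proj_matrices_add:
  assumes "subspace Y" "M \<in> proj_matrices Y" "E \<in> proj_directions Y"
  shows "M + E \<in> proj_matrices Y"
  using assms by (auto simp: proj_matrices_def proj_directions_def matrix_vector_mult_add_rdistrib
      subspace_add)

lemma subspace_proj_directions:
  assumes "subspace Y"
  shows "subspace (proj_directions Y)"
  using assms unfolding subspace_def proj_directions_def
  by (auto simp: matrix_vector_mult_add_rdistrib scaleR_matrix_vector_assoc[symmetric])

lemma closed_proj_matrices:
  fixes Y :: "(real^'n) set"
  assumes "subspace Y"
  shows "closed (proj_matrices Y)"
proof -
  have "continuous_on UNIV (\<lambda>M::real^'n^'n. M *v x)" for x
    by (intro linear_continuous_on linear_conv_bounded_linear[THEN iffD1])
      (simp add: linear_iff matrix_vector_mult_add_rdistrib scaleR_matrix_vector_assoc[symmetric])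
  then have "closed ((\<lambda>M::real^'n^'n. M *v x) -` Y)" "closed ((\<lambda>M::real^'n^'n. M *v x) -` {x})" for x
    using closed_subspace[OF assms] closed_vimage by blast+
  moreover have "proj_matrices Y = (\<Inter>x. (\<lambda>M. M *v x) -` Y) \<inter> (\<Inter>y\<in>Y. (\<lambda>M. M *v y) -` {y})"
    by (auto simp: proj_matrices_def)
  ultimately show ?thesis
    by (auto intro!: closed_INT closed_Int)
qed

lemma proj_matrices_nonempty:
  fixes Y :: "(real^'n) set"
  assumes Y: "subspace Y"
  shows "proj_matrices Y \<noteq> {}"
proof -
  obtain S where S: "S \<subseteq> Y" "independent S" "Y \<subseteq> span S" "card S = dim Y"
    by (rule basis_exists)
  obtain T where T: "S \<subseteq> T" "independent T" "UNIV \<subseteq> span T"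
    by (rule maximal_independent_subset_extend[OF subset_UNIV S(2)])
  obtain g :: "real^'n \<Rightarrow> real^'n"
    where g: "linear g" "\<forall>x\<in>T. g x = (if x \<in> S then x else 0)"
    using linear_independent_extend[OF T(2), of "\<lambda>x. if x \<in> S then x else 0"] by blast
  have "g y = y" if "y \<in> Y" for y
  proof -
    have "\<And>b. b \<in> S \<Longrightarrow> g b = id b"
      using g(2) T(1) by auto
    then have "g y = id y"
      using linear_eq_on_span[of g id S y] g(1) linear_id S(3) that by blast
    then show ?thesis
      by simp
  qed
  moreover have "g x \<in> Y" for x
  proof -
    have "g ` T \<subseteq> Y"
      using g(2) S(1) subspace_0[OF Y] by auto
    then have "span (g ` T) \<subseteq> Y"
      using span_minimal[OF _ Y] by blast
    moreover have "g x \<in> span (g ` T)"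
      using T(3) unfolding span_linear_image[OF g(1)] by blast
    ultimately show ?thesis
      by blast
  qed
  ultimately have "matrix g \<in> proj_matrices Y"
    using g(1) by (simp add: proj_matrices_def)
  then show ?thesis
    by blast
qed

definition outer_prod :: "real^'n \<Rightarrow> real^'n \<Rightarrow> real^'n^'n" where
  "outer_prod a b = (\<chi> i j. a $ i * b $ j)"

lemma outer_prod_mult: "outer_prod a b *v x = (b \<bullet> x) *\<^sub>R a"
proof -
  have "(\<Sum>j\<in>UNIV. a $ i * b $ j * x $ j) = (b \<bullet> x) * a $ i" for i
    by (simp add: inner_vec_def sum_distrib_left sum_distrib_right ac_simps)
  then show ?thesis
    by (simp add: outer_prod_def matrix_vector_mult_def vec_eq_iff)
qed

lemma outer_prod_scaleR_left: "outer_prod (c *\<^sub>R a) b = c *\<^sub>R outer_prod a b"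
  by (simp add: outer_prod_def vec_eq_iff mult.assoc)

lemma linear_outer_prod_left: "linear (\<lambda>a. outer_prod a b)"
  by (simp add: linear_iff outer_prod_def vec_eq_iff algebra_simps)

lemma linear_outer_prod_right: "linear (\<lambda>b. outer_prod a b)"
  by (simp add: linear_iff outer_prod_def vec_eq_iff algebra_simps)

lemma outer_prod_in_proj_directions:
  assumes "a \<in> Y" "subspace Y" "\<And>y. y \<in> Y \<Longrightarrow> b \<bullet> y = 0"
  shows "outer_prod a b \<in> proj_directions Y"
  using assms by (simp add: proj_directions_def outer_prod_mult subspace_scale)

text \<open>The maps \<open>a \<mapsto> a b\<^sub>0\<^sup>T\<close> (\<open>a \<in> Y\<close>) and \<open>b \<mapsto> a\<^sub>0 b\<^sup>T\<close> (\<open>b \<perp> Y\<close>) embed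
  \<open>Y\<close> and its orthogonal complement into \<open>proj_directions Y\<close>, with images meeting only in
  multiples of \<open>a\<^sub>0 b\<^sub>0\<^sup>T\<close>; hence \<open>dim \<ge> k + (n - k) - 1\<close>.\<close>
lemma dim_proj_directions:
  fixes Y :: "(real^'n) set"
  assumes Y: "subspace Y" and "0 < dim Y" "dim Y < CARD('n)"
  shows "CARD('n) - 1 \<le> dim (proj_directions Y)"
proof -
  define Yp where "Yp = {b. \<forall>y\<in>Y. orthogonal y b}"
  have "subspace Yp"
    unfolding Yp_def by (rule subspace_orthogonal_to_vectors)
  have dim_Yp: "dim Yp + dim Y = CARD('n)"
    using dim_subspace_orthogonal_to_vectors[OF Y subspace_UNIV] by (simp add: Yp_def)
  obtain a0 where a0: "a0 \<in> Y" "a0 \<noteq> 0"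
    using assms(2) by (metis dim_eq_0 not_gr0 singletonI subsetI)
  obtain b0 where b0: "b0 \<in> Yp" "b0 \<noteq> 0"
    using dim_Yp assms(3) by (metis add_cancel_right_left dim_eq_0 less_irrefl singletonI subsetI)
  have perp: "b \<bullet> y = 0" if "b \<in> Yp" "y \<in> Y" for b y
    using that inner_commute[of y b] by (simp add: Yp_def orthogonal_def)
  define A1 where "A1 = (\<lambda>a. outer_prod a b0) ` Y"
  define A2 where "A2 = (\<lambda>b. outer_prod a0 b) ` Yp"
  have "inj_on (\<lambda>a. outer_prod a b0) (span Y)"
  proof (rule inj_onI)
    fix a a' assume "outer_prod a b0 = outer_prod a' b0"
    then have "(b0 \<bullet> b0) *\<^sub>R a = (b0 \<bullet> b0) *\<^sub>R a'"
      by (metis outer_prod_mult)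
    then show "a = a'"
      using b0(2) by simp
  qed
  then have dim_A1: "dim A1 = dim Y"
    unfolding A1_def by (rule dim_image_eq[OF linear_outer_prod_left])
  have "inj_on (\<lambda>b. outer_prod a0 b) (span Yp)"
  proof (rule inj_onI)
    fix b b' assume "outer_prod a0 b = outer_prod a0 b'"
    then have "(b \<bullet> x) *\<^sub>R a0 = (b' \<bullet> x) *\<^sub>R a0" for x
      by (metis outer_prod_mult)
    then have "b \<bullet> x = b' \<bullet> x" for x
      using a0(2) by simp
    then show "b = b'"
      using vector_eq_rdot by blast
  qed
  then have dim_A2: "dim A2 = dim Yp"
    unfolding A2_def by (rule dim_image_eq[OF linear_outer_prod_right])
  have "A1 \<inter> A2 \<subseteq> span {outer_prod a0 b0}"
  proof
    fix X assume "X \<in> A1 \<inter> A2"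
    then obtain a b where ab: "X = outer_prod a b0" "X = outer_prod a0 b"
      unfolding A1_def A2_def by blast
    then have eq: "(b0 \<bullet> b0) *\<^sub>R a = (b \<bullet> b0) *\<^sub>R a0"
      by (metis outer_prod_mult)
    have "a = (1 / (b0 \<bullet> b0)) *\<^sub>R ((b0 \<bullet> b0) *\<^sub>R a)"
      using b0(2) by simp
    also have "\<dots> = ((b \<bullet> b0) / (b0 \<bullet> b0)) *\<^sub>R a0"
      unfolding eq by simp
    finally have "a = ((b \<bullet> b0) / (b0 \<bullet> b0)) *\<^sub>R a0" .
    then have "X = ((b \<bullet> b0) / (b0 \<bullet> b0)) *\<^sub>R outer_prod a0 b0"
      using ab(1) by (simp add: outer_prod_scaleR_left)
    then show "X \<in> span {outer_prod a0 b0}"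
      by (simp add: span_base span_scale)
  qed
  then have "dim (A1 \<inter> A2) \<le> dim (span {outer_prod a0 b0})"
    by (rule dim_subset)
  also have "\<dots> \<le> 1"
    by (simp add: dim_singleton)
  finally have "dim (A1 \<inter> A2) \<le> 1" .
  moreover have "dim {x + y |x y. x \<in> A1 \<and> y \<in> A2} + dim (A1 \<inter> A2) = dim A1 + dim A2"
    unfolding A1_def A2_def
    using Y \<open>subspace Yp\<close> linear_outer_prod_left linear_outer_prod_right
    by (intro dim_sums_Int linear_subspace_image)
  moreover have "{x + y |x y. x \<in> A1 \<and> y \<in> A2} \<subseteq> proj_directions Y"
    unfolding A1_def A2_def
  proof clarify
    fix a b assume "a \<in> Y" "b \<in> Yp"
    then have "outer_prod a b0 \<in> proj_directions Y" "outer_prod a0 b \<in> proj_directions Y"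
      using a0(1) b0(1) perp Y by (auto intro!: outer_prod_in_proj_directions)
    then show "outer_prod a b0 + outer_prod a0 b \<in> proj_directions Y"
      by (rule subspace_add[OF subspace_proj_directions[OF Y]])
  qed
  then have "dim {x + y |x y. x \<in> A1 \<and> y \<in> A2} \<le> dim (proj_directions Y)"
    by (rule dim_subset)
  ultimately show ?thesis
    using dim_A1 dim_A2 dim_Yp by linarith
qed

locale polyhedral_projection = polyhedral_normed N for N :: "real^'n \<Rightarrow> real" +
  fixes Y :: "(real^'n) set"
  assumes subspace_Y: "subspace Y"
begin

sublocale affine_max_form_problem "V \<times> W" pair_eval "proj_matrices Y" "proj_directions Y"
  by unfold_locales
    (auto simp: subspace_proj_directions subspace_Y proj_matrices_add max_form_eq_0_imp_zero)

lemma exists_minimizer: obtains M where "minimizer M"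
proof -
  have "bounded {M \<in> proj_matrices Y. max_form M \<le> c}" for c
    by (rule bounded_subset[OF bounded_max_form_sublevel]) auto
  then obtain M where "M \<in> proj_matrices Y" "\<And>M'. M' \<in> proj_matrices Y \<Longrightarrow> max_form M \<le> max_form M'"
    using continuous_attains_inf_bounded_sublevel[OF closed_proj_matrices[OF subspace_Y]
        proj_matrices_nonempty[OF subspace_Y] continuous_max_form]
    by blast
  then show ?thesis
    using that by (auto simp: minimizer_def)
qed

lemma projection_norms: "{op_norm_N N P | P. is_projection Y P} = max_form ` proj_matrices Y"
proof (intro set_eqI iffI)
  fix s assume "s \<in> {op_norm_N N P | P. is_projection Y P}"
  then obtain P where "is_projection Y P" "s = op_norm_N N P"
    by blast
  then show "s \<in> max_form ` proj_matrices Y"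
    using is_projection_imp_matrix op_norm_eq_max_form by (metis image_eqI)
next
  fix s assume "s \<in> max_form ` proj_matrices Y"
  then obtain M where "M \<in> proj_matrices Y" "s = op_norm_N N (\<lambda>x. M *v x)"
    using op_norm_eq_max_form by auto
  then show "s \<in> {op_norm_N N P | P. is_projection Y P}"
    using is_projection_matrix_iff by blast
qed

lemma minimizer_in_min_projections:
  assumes "minimizer M"
  shows "(\<lambda>x. M *v x) \<in> min_projections N Y"
proof -
  have "proj_const N Y = max_form M"
    unfolding proj_const_def projection_norms
    using assms by (intro cInf_eq_minimum) (auto simp: minimizer_def)
  then show ?thesis
    using assms by (simp add: min_projections_def minimizer_def is_projection_matrix_iff
        op_norm_eq_max_form)
qed

lemma norming_pairs_eq_active: "norming_pairs N (\<lambda>x. M *v x) = active M"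
proof -
  have "norming_pairs N (\<lambda>x. M *v x) = {(x, u) |x u. x \<in> V \<and> u \<in> W \<and> u \<bullet> (M *v x) = max_form M}"
    unfolding norming_pairs_def op_norm_eq_max_form by (simp add: V_def W_def)
  then show ?thesis
    by (auto simp: active_def pair_eval_def)
qed

end

theorem mainTheorem3:
  fixes N :: "real^'n \<Rightarrow> real" and Y :: "(real^'n) set" and k :: nat
  assumes "polyhedral_norm N"
    and "subspace Y" and "dim Y = k"
    and "1 \<le> k" and "k \<le> CARD('n) - 1"
  shows "\<exists>P \<in> min_projections N Y. CARD('n) \<le> card (norming_pairs N P)"
proof -
  interpret polyhedral_projection N Y
    using assms(1,2) by unfold_locales (auto simp: polyhedral_normed_def)
  obtain M where M: "minimizer M" "dim (proj_directions Y) < card (active M)"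
    using exists_minimizer exists_minimizer_many_active by metis
  moreover have "CARD('n) - 1 \<le> dim (proj_directions Y)"
    using dim_proj_directions[OF assms(2)] assms(3-5) by simp
  ultimately have "CARD('n) \<le> card (norming_pairs N (\<lambda>x. M *v x))"
    by (simp add: norming_pairs_eq_active)
  then show ?thesis
    using minimizer_in_min_projections[OF M(1)] by blast
qed

end
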